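(* Let $m_1,m_2\in\mathbb{N}$ be relatively prime and $\alpha\in\mathbb{R}$. (i) If $m_1+m_2$ is odd, then the set $\mathrm{LS}_\alpha=\{\boldsymbol{\varrho}^{(\boldsymbol{m})}_\alpha(t_l):\ l\in\{0,\dots,4m_1m_2-1\}\}$, with $t_l=\frac{l\pi}{2m_1m_2}$, is exactly the union of all self-intersection points and all boundary points of the closed curve $\boldsymbol{\varrho}^{(\boldsymbol{m})}_\alpha$. It contains $2m_1m_2+1$ points: the center $(0,0)$, which is traversed $2m_2$ times in one period $2\pi$; $2(m_1-1)m_2$ ordinary double points distinct from $(0,0)$; and $2m_2$ points on the unit circle. (ii) If $m_1+m_2$ is even, then the curve $\boldsymbol{\varrho}^{(\boldsymbol{m})}_\alpha$ has $\frac12(m_1-1)m_2$ ordinary double points distinct from $(0,0)$ and $m_2$ points on the unit circle, and the center $(0,0)$ is traversed $m_2$ times in one (minimal) period $\pi$.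
   Context: For $\boldsymbol{m}=(m_1,m_2)\in\mathbb{N}^2$ and $\alpha\in\mathbb{R}$, the rhodonea curve is $\boldsymbol{\varrho}^{(\boldsymbol{m})}_\alpha(t)=\big(\cos(m_2t)\cos(m_1t-\alpha\pi),\ \cos(m_2t)\sin(m_1t-\alpha\pi)\big)$, $t\in\mathbb{R}$, with values in the unit disk $\mathbb{D}=\{x\in\mathbb{R}^2:|x|\le1\}$. For relatively prime $m_1,m_2$ its minimal period $P$ is $2\pi$ if $m_1+m_2$ is odd and $\pi$ if $m_1+m_2$ is even. A point $x$ of the curve is a self-intersection point if there are at least two distinct parameters $t\in[0,P)$ with $\boldsymbol{\varrho}^{(\boldsymbol{m})}_\alpha(t)=x$; it is an ordinary double point if there are exactly two such parameters; it is a boundary point if $|x|=1$. "Traversed $k$ times in one period" means there are exactly $k$ parameters $t\in[0,P)$ with $\boldsymbol{\varrho}^{(\boldsymbol{m})}_\alpha(t)=x$. *)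

theory Defs
  imports "HOL-Analysis.Analysis"
begin

definition rhodonea :: "nat \<Rightarrow> nat \<Rightarrow> real \<Rightarrow> real \<Rightarrow> real \<times> real" where
  "rhodonea m1 m2 \<alpha> t =
     (cos (real m2 * t) * cos (real m1 * t - \<alpha> * pi),
      cos (real m2 * t) * sin (real m1 * t - \<alpha> * pi))"

text \<open>Minimal period (for relatively prime m1, m2).\<close>
definition rho_period :: "nat \<Rightarrow> nat \<Rightarrow> real" where
  "rho_period m1 m2 = (if odd (m1 + m2) then 2 * pi else pi)"

definition rho_params :: "nat \<Rightarrow> nat \<Rightarrow> real \<Rightarrow> real \<times> real \<Rightarrow> real set" where
  "rho_params m1 m2 \<alpha> x = {t. 0 \<le> t \<and> t < rho_period m1 m2 \<and> rhodonea m1 m2 \<alpha> t = x}"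

definition self_intersection :: "nat \<Rightarrow> nat \<Rightarrow> real \<Rightarrow> real \<times> real \<Rightarrow> bool" where
  "self_intersection m1 m2 \<alpha> x \<longleftrightarrow>
     (\<exists>s t. s \<in> rho_params m1 m2 \<alpha> x \<and> t \<in> rho_params m1 m2 \<alpha> x \<and> s \<noteq> t)"

definition traversed :: "nat \<Rightarrow> nat \<Rightarrow> real \<Rightarrow> real \<times> real \<Rightarrow> nat \<Rightarrow> bool" where
  "traversed m1 m2 \<alpha> x k \<longleftrightarrow> finite (rho_params m1 m2 \<alpha> x) \<and> card (rho_params m1 m2 \<alpha> x) = k"

definition ordinary_double_point :: "nat \<Rightarrow> nat \<Rightarrow> real \<Rightarrow> real \<times> real \<Rightarrow> bool" where
  "ordinary_double_point m1 m2 \<alpha> x \<longleftrightarrow> traversed m1 m2 \<alpha> x 2"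

definition boundary_points :: "nat \<Rightarrow> nat \<Rightarrow> real \<Rightarrow> (real \<times> real) set" where
  "boundary_points m1 m2 \<alpha> = {x \<in> range (rhodonea m1 m2 \<alpha>). norm x = 1}"

definition LS :: "nat \<Rightarrow> nat \<Rightarrow> real \<Rightarrow> (real \<times> real) set" where
  "LS m1 m2 \<alpha> = (\<lambda>l. rhodonea m1 m2 \<alpha> (real l * pi / (2 * real m1 * real m2))) ` {0..<4*m1*m2}"

end

theory Submission
  imports Defs
begin

text \<open>Up to the rotation by \<open>-\<alpha>\<pi>\<close>, the curve is \<open>z(t) = cos(m\<^sub>2t) exp(i m\<^sub>1t)\<close>.
  If \<open>z(s) = z(t) \<noteq> 0\<close>, then \<open>m\<^sub>1(s - t) = j\<pi>\<close> and \<open>m\<^sub>2(s + t) = a\<pi>\<close> or \<open>m\<^sub>2(s - t) = a\<pi>\<close>,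
  with \<open>a + j\<close> even. By coprimality the second alternative makes \<open>s - t\<close> a period of the curve,
  which is impossible for distinct parameters in one period. Hence every double point off the
  centre has exactly two parameters, each of the form \<open>t\<^sub>l = l\<pi>/(2m\<^sub>1m\<^sub>2)\<close> with
  \<open>l = m\<^sub>1a - m\<^sub>2j\<close>, \<open>a + j\<close> even; these \<open>l\<close> are all integers if \<open>m\<^sub>1 + m\<^sub>2\<close> is odd
  and the even ones otherwise. The indices \<open>l \<equiv> m\<^sub>1\<close> and \<open>l \<equiv> 0 (mod 2m\<^sub>1)\<close> give the centre and
  the boundary points; counting the remaining indices in one period and halving gives the number
  of double points.\<close>

section \<open>The curve in the complex plane\<close>

definition rose_complex :: "nat \<Rightarrow> nat \<Rightarrow> real \<Rightarrow> complex" where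
  "rose_complex m1 m2 t = complex_of_real (cos (real m2 * t)) * cis (real m1 * t)"

lemma rhodonea_eq_iff_rose_complex_eq:
  "rhodonea m1 m2 \<alpha> s = rhodonea m1 m2 \<alpha> t \<longleftrightarrow> rose_complex m1 m2 s = rose_complex m1 m2 t"
proof -
  let ?rot = "\<lambda>u. rose_complex m1 m2 u * cis (- \<alpha> * pi)"
  have rhodonea_rot: "rhodonea m1 m2 \<alpha> u = (Re (?rot u), Im (?rot u))" for u
    unfolding rhodonea_def rose_complex_def
    by (simp add: cis_mult[symmetric] cis.simps algebra_simps cos_diff sin_diff)
  have "rhodonea m1 m2 \<alpha> s = rhodonea m1 m2 \<alpha> t \<longleftrightarrow> ?rot s = ?rot t"
    unfolding rhodonea_rot by (simp add: complex_eq_iff)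
  then show ?thesis by simp
qed

lemma rhodonea_eq_0_iff: "rhodonea m1 m2 \<alpha> t = (0,0) \<longleftrightarrow> cos (real m2 * t) = 0"
proof -
  have "cos (real m2 * t) * cos x = 0 \<and> cos (real m2 * t) * sin x = 0 \<longleftrightarrow> cos (real m2 * t) = 0" for x
    using sin_cos_squared_add[of x] by (auto simp: power2_eq_square)
  then show ?thesis unfolding rhodonea_def by simp
qed

lemma norm_rhodonea: "norm (rhodonea m1 m2 \<alpha> t) = \<bar>cos (real m2 * t)\<bar>"
proof -
  have "(c * cos x)\<^sup>2 + (c * sin x)\<^sup>2 = c\<^sup>2" for c x :: real
    using sin_cos_squared_add[of x] by algebra
  then show ?thesis unfolding rhodonea_def by (simp add: norm_Pair)
qed

lemma norm_rhodonea_eq_1_iff: "norm (rhodonea m1 m2 \<alpha> t) = 1 \<longleftrightarrow> sin (real m2 * t) = 0"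
  by (simp add: norm_rhodonea abs_square_eq_1[symmetric] cos_squared_eq)

lemma cos_int_pi_mult_cos_int_pi:
  fixes a j :: int
  assumes "even (a + j)"
  shows "cos (of_int a * pi) * cos (of_int j * pi) = 1"
  using assms by (simp add: mult.commute[of _ pi])

lemma rose_complex_eq_if_reflection:
  assumes "real m2 * (s + t) = of_int a * pi" "real m1 * (s - t) = of_int j * pi" "even (a + j)"
  shows "rose_complex m1 m2 s = rose_complex m1 m2 t"
proof -
  have "real m2 * s = of_int a * pi - real m2 * t" using assms(1) by (simp add: algebra_simps)
  then have cos_s: "cos (real m2 * s) = cos (of_int a * pi) * cos (real m2 * t)"
    by (simp add: cos_diff mult.commute[of _ pi])
  have "real m1 * s = real m1 * t + of_int j * pi" using assms(2) by (simp add: algebra_simps)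
  then have cis_s: "cis (real m1 * s) = cis (real m1 * t) * complex_of_real (cos (of_int j * pi))"
    by (simp add: cis_mult[symmetric] cis.simps complex_eq_iff mult.commute[of _ pi])
  have "rose_complex m1 m2 s
      = complex_of_real (cos (of_int a * pi) * cos (of_int j * pi)) * rose_complex m1 m2 t"
    unfolding rose_complex_def cos_s cis_s by (simp add: algebra_simps)
  then show ?thesis using cos_int_pi_mult_cos_int_pi[OF assms(3)] by simp
qed

lemma rose_complex_translate:
  fixes e :: int
  assumes "even ((int m1 + int m2) * e)"
  shows "rose_complex m1 m2 (t + of_int e * pi) = rose_complex m1 m2 t"
proof -
  have cos_shift: "cos (real m2 * (t + of_int e * pi)) = cos (real m2 * t) * cos (of_int (int m2 * e) * pi)"
    using sin_npi_int[of "int m2 * e"] by (simp add: algebra_simps cos_add mult.commute[of _ pi])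
  have cis_shift: "cis (real m1 * (t + of_int e * pi))
      = cis (real m1 * t) * complex_of_real (cos (of_int (int m1 * e) * pi))"
    using sin_npi_int[of "int m1 * e"]
    by (simp add: algebra_simps cis_mult[symmetric] cis.simps complex_eq_iff mult.commute[of _ pi])
  have "rose_complex m1 m2 (t + of_int e * pi)
      = complex_of_real (cos (of_int (int m1 * e) * pi) * cos (of_int (int m2 * e) * pi)) * rose_complex m1 m2 t"
    unfolding rose_complex_def cos_shift cis_shift by (simp add: algebra_simps)
  moreover have "cos (of_int (int m1 * e) * pi) * cos (of_int (int m2 * e) * pi) = 1"
    using assms by (intro cos_int_pi_mult_cos_int_pi) (simp add: algebra_simps)
  ultimately show ?thesis by (simp only: of_real_1 mult_1_left)
qed

lemma rose_complex_eq_cases: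
  assumes eq: "rose_complex m1 m2 s = rose_complex m1 m2 t" and nz: "cos (real m2 * t) \<noteq> 0"
  obtains a j :: int where "real m1 * (s - t) = of_int j * pi" "even (a + j)"
    "real m2 * (s + t) = of_int a * pi \<or> real m2 * (s - t) = of_int a * pi"
proof -
  define A where "A = cos (real m2 * s)"
  define B where "B = cos (real m2 * t)"
  define u where "u = real m1 * s"
  define v where "v = real m1 * t"
  have e1: "A * cos u = B * cos v" and e2: "A * sin u = B * sin v"
    using eq unfolding rose_complex_def A_def B_def u_def v_def by (simp_all add: complex_eq_iff cis.simps)
  have "A * sin (u - v) = (A * sin u) * cos v - (A * cos u) * sin v"
    by (simp add: sin_diff algebra_simps)
  then have sin0: "A * sin (u - v) = 0" using e1 e2 by (simp add: algebra_simps)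
  have "A * cos (u - v) = (A * cos u) * cos v + (A * sin u) * sin v"
    by (simp add: cos_diff algebra_simps)
  also have "\<dots> = B * ((sin v)\<^sup>2 + (cos v)\<^sup>2)" using e1 e2 by algebra
  finally have cos1: "A * cos (u - v) = B" by simp
  then have "A \<noteq> 0" using nz B_def by auto
  with sin0 obtain j :: int where j: "u - v = of_int j * pi"
    using sin_zero_iff_int2 by auto
  have "cos (real m2 * s + of_int j * pi) = A * cos (of_int j * pi)"
    by (simp add: cos_add A_def mult.commute[of _ pi])
  also have "\<dots> = B" using cos1 j by simp
  finally have "cos (real m2 * s + of_int j * pi) - cos (real m2 * t) = 0" by (simp add: B_def)
  then have "sin ((real m2 * s + of_int j * pi + real m2 * t) / 2) = 0 \<or>
             sin ((real m2 * t - (real m2 * s + of_int j * pi)) / 2) = 0"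
    unfolding cos_diff_cos by simp
  moreover have j': "real m1 * (s - t) = of_int j * pi" using j by (simp add: u_def v_def algebra_simps)
  ultimately show thesis
  proof (elim disjE)
    assume "sin ((real m2 * s + of_int j * pi + real m2 * t) / 2) = 0"
    then obtain k :: int where "(real m2 * s + of_int j * pi + real m2 * t) / 2 = of_int k * pi"
      using sin_zero_iff_int2 by blast
    then have "real m2 * (s + t) = of_int (2 * k - j) * pi" by (simp add: algebra_simps)
    then show thesis using that[OF j', of "2 * k - j"] by simp
  next
    assume "sin ((real m2 * t - (real m2 * s + of_int j * pi)) / 2) = 0"
    then obtain k :: int where "(real m2 * t - (real m2 * s + of_int j * pi)) / 2 = of_int k * pi"
      using sin_zero_iff_int2 by blast
    then have "real m2 * (s - t) = of_int (- 2 * k - j) * pi" by (simp add: algebra_simps)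
    then show thesis using that[OF j', of "- 2 * k - j"] by simp
  qed
qed

section \<open>Zeros of sine and cosine; counting lemmas\<close>

lemma sin_zeros_in_interval:
  assumes "n > 0"
  shows "{t \<in> {0..<real K * pi / real n}. sin (real n * t) = 0} = (\<lambda>k. real k * pi / real n) ` {0..<K}"
proof (intro equalityI subsetI)
  fix t assume "t \<in> {t \<in> {0..<real K * pi / real n}. sin (real n * t) = 0}"
  then have t: "0 \<le> real n * t" "real n * t < real K * pi" "sin (real n * t) = 0"
    using assms by (auto simp: field_simps)
  then obtain i :: int where i: "real n * t = of_int i * pi" using sin_zero_iff_int2 by blast
  have "0 \<le> i" using t(1) i pi_gt_zero by (simp add: zero_le_mult_iff)
  moreover have "i < int K" using t(2) i by simp
  moreover have "t = real (nat i) * pi / real n"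
    using i \<open>0 \<le> i\<close> assms by (simp add: field_simps)
  ultimately show "t \<in> (\<lambda>k. real k * pi / real n) ` {0..<K}"
    by (intro image_eqI[of _ _ "nat i"]) auto
next
  fix t assume "t \<in> (\<lambda>k. real k * pi / real n) ` {0..<K}"
  then obtain k where k: "k < K" "t = real k * pi / real n" by auto
  have "real n * t = of_int (int k) * pi" using k assms by simp
  then have "sin (real n * t) = 0" using sin_zero_iff_int2 by blast
  then show "t \<in> {t \<in> {0..<real K * pi / real n}. sin (real n * t) = 0}"
    using k assms by (auto simp: divide_strict_right_mono)
qed

lemma cos_zeros_in_interval:
  assumes "n > 0"
  shows "{t \<in> {0..<real K * pi / real n}. cos (real n * t) = 0}
       = (\<lambda>k. real (2 * k + 1) * pi / real (2 * n)) ` {0..<K}"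
proof (intro equalityI subsetI)
  fix t assume "t \<in> {t \<in> {0..<real K * pi / real n}. cos (real n * t) = 0}"
  then have t: "0 \<le> real n * t" "real n * t < real K * pi" "cos (real n * t) = 0"
    using assms by (auto simp: field_simps)
  then obtain i :: int where i: "odd i" "real n * t = of_int i * (pi / 2)" using cos_zero_iff_int by blast
  then obtain k where k: "i = 2 * k + 1" by (metis oddE)
  have "0 \<le> k" using t(1) i k pi_gt_zero by (simp add: zero_le_mult_iff)
  moreover have "k < int K"
  proof -
    have "(2 * of_int k + 1) * pi < (2 * real K) * pi" using t(2) i k by (simp add: field_simps)
    then have "2 * of_int k + 1 < 2 * real K" by simp
    then show ?thesis by linarith
  qed
  moreover have "t = real (2 * nat k + 1) * pi / real (2 * n)"
    using i k \<open>0 \<le> k\<close> assms by (simp add: field_simps)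
  ultimately show "t \<in> (\<lambda>k. real (2 * k + 1) * pi / real (2 * n)) ` {0..<K}"
    by (intro image_eqI[of _ _ "nat k"]) auto
next
  fix t assume "t \<in> (\<lambda>k. real (2 * k + 1) * pi / real (2 * n)) ` {0..<K}"
  then obtain k where k: "k < K" "t = real (2 * k + 1) * pi / real (2 * n)" by auto
  have "real n * t = of_int (2 * int k + 1) * (pi / 2)" using k assms by (simp add: field_simps)
  then have "cos (real n * t) = 0" unfolding cos_zero_iff_int by (intro exI[of _ "2 * int k + 1"]) simp
  moreover have "t < real K * pi / real n"
  proof -
    have "real (2 * k + 1) * pi < real (2 * K) * pi" using k by simp
    then show ?thesis using k assms by (simp add: field_simps)
  qed
  ultimately show "t \<in> {t \<in> {0..<real K * pi / real n}. cos (real n * t) = 0}"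
    using k by simp
qed

lemma sin_int_pi_div_eq_0_iff:
  assumes "n > 0"
  shows "sin (of_int l * pi / real n) = 0 \<longleftrightarrow> int n dvd l"
proof -
  have "of_int l * pi / real n = of_int i * pi \<longleftrightarrow> l = int n * i" for i
  proof -
    have "of_int l * pi / real n = of_int i * pi \<longleftrightarrow> of_int l * pi = of_int (int n * i) * pi"
      using assms by (simp add: field_simps)
    then show ?thesis by (simp only: mult_cancel_right pi_neq_zero of_int_eq_iff simp_thms)
  qed
  then show ?thesis by (auto simp: sin_zero_iff_int2 dvd_def)
qed

lemma cos_int_pi_div_eq_0_iff:
  assumes "n > 0"
  shows "cos (of_int l * pi / (2 * real n)) = 0 \<longleftrightarrow> l mod (2 * int n) = int n"
proof -
  have "of_int l * pi / (2 * real n) = of_int i * (pi / 2) \<longleftrightarrow> l = int n * i" for i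
  proof -
    have "of_int l * pi / (2 * real n) = of_int i * (pi / 2) \<longleftrightarrow> of_int l * pi = of_int (int n * i) * pi"
      using assms by (simp add: field_simps)
    then show ?thesis by (simp only: mult_cancel_right pi_neq_zero of_int_eq_iff simp_thms)
  qed
  then have "cos (of_int l * pi / (2 * real n)) = 0 \<longleftrightarrow> (\<exists>i. odd i \<and> l = int n * i)"
    by (auto simp: cos_zero_iff_int)
  also have "\<dots> \<longleftrightarrow> l mod (2 * int n) = int n"
  proof
    assume "\<exists>i. odd i \<and> l = int n * i"
    then obtain k where "l = int n * (2 * k + 1)" by (auto elim!: oddE)
    then have "l = int n + 2 * int n * k" by (simp add: algebra_simps)
    then show "l mod (2 * int n) = int n" using assms by simp
  next
    assume "l mod (2 * int n) = int n"
    then have "l = int n * (2 * (l div (2 * int n)) + 1)"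
      using div_mult_mod_eq[of l "2 * int n"] by (simp add: algebra_simps)
    then show "\<exists>i. odd i \<and> l = int n * i" by (intro exI[of _ "2 * (l div (2 * int n)) + 1"]) simp
  qed
  finally show ?thesis .
qed

lemma card_eq_mult_card_image_if_fibres:
  assumes "finite A" "\<And>y. y \<in> f ` A \<Longrightarrow> card {x \<in> A. f x = y} = k"
  shows "card A = k * card (f ` A)"
proof -
  have "(\<Sum>x\<in>A. card {y \<in> f ` A. f x = y}) = k * card (f ` A)"
    using assms by (intro sum_multicount) auto
  moreover have "{y \<in> f ` A. f x = y} = {f x}" if "x \<in> A" for x
    using that by auto
  ultimately show ?thesis by simp
qed

lemma card_int_range_mod_in:
  fixes b :: int
  assumes "b > 0" "R \<subseteq> {0..<b}"
  shows "card {l. 0 \<le> l \<and> l < b * int n \<and> l mod b \<in> R} = n * card R"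
proof -
  let ?f = "\<lambda>(q, r). b * q + r"
  have div_mod: "(b * q + r) div b = q" "(b * q + r) mod b = r" if "r \<in> R" for q r
    using that assms by auto
  have "{l. 0 \<le> l \<and> l < b * int n \<and> l mod b \<in> R} = ?f ` ({0..<int n} \<times> R)"
  proof (intro equalityI subsetI)
    fix l assume l: "l \<in> {l. 0 \<le> l \<and> l < b * int n \<and> l mod b \<in> R}"
    have "b * (l div b) = l - l mod b" by (simp add: minus_mod_eq_mult_div)
    then have "b * (l div b) < b * int n" using l pos_mod_sign[OF assms(1), of l] by simp
    then have "l div b \<in> {0..<int n}"
      using l assms(1) by (simp add: pos_imp_zdiv_nonneg_iff)
    then show "l \<in> ?f ` ({0..<int n} \<times> R)"
      using l by (intro image_eqI[of _ _ "(l div b, l mod b)"]) auto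
  next
    fix l assume "l \<in> ?f ` ({0..<int n} \<times> R)"
    then obtain q r where qr: "l = b * q + r" "0 \<le> q" "q < int n" "r \<in> R" by auto
    have "b * q + r < b * (q + 1)" using qr(4) assms by (auto simp: algebra_simps)
    also have "\<dots> \<le> b * int n" using qr(3) assms(1) by (intro mult_left_mono) auto
    finally show "l \<in> {l. 0 \<le> l \<and> l < b * int n \<and> l mod b \<in> R}"
      using qr div_mod assms by force
  qed
  moreover have "inj_on ?f ({0..<int n} \<times> R)"
    by (rule inj_onI) (clarsimp, metis div_mod)
  ultimately show ?thesis by (simp add: card_image card_cartesian_product)
qed

section \<open>Parameters of double points\<close>

locale coprime_rhodonea =
  fixes m1 m2 :: nat
  assumes m1_pos: "m1 > 0" and m2_pos: "m2 > 0" and coprime_m1_m2: "coprime m1 m2"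
begin

lemma odd_odd_if_even_sum: "even (m1 + m2) \<Longrightarrow> odd m1 \<and> odd m2"
  using coprime_m1_m2 coprime_common_divisor[of m1 m2 2] by auto

lemma common_pi_multiple:
  assumes "real m1 * x = of_int j * pi" "real m2 * x = of_int b * pi" "even (j + b)"
  obtains e :: int where "x = of_int e * pi" "even ((int m1 + int m2) * e)"
proof -
  have "real m2 * (real m1 * x) = real m1 * (real m2 * x)" by simp
  then have "of_int (int m2 * j) * pi = of_int (int m1 * b) * pi"
    using assms by simp
  then have jb: "int m2 * j = int m1 * b"
    by (simp only: mult_cancel_right pi_neq_zero of_int_eq_iff simp_thms)
  have "coprime (int m1) (int m2)" using coprime_m1_m2 by simp
  moreover have "int m1 dvd int m2 * j" using jb by simp
  ultimately obtain e where je: "j = int m1 * e" by (auto simp: coprime_dvd_mult_right_iff)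
  then have "b = int m2 * e" using jb m1_pos by (simp add: algebra_simps)
  moreover have "x = of_int e * pi" using assms(1) je m1_pos by simp
  ultimately show thesis using that assms(3) je by (simp add: algebra_simps)
qed

text \<open>Both the centre and the unit circle are reached \<open>petals\<close> times per period.\<close>
definition petals :: nat where
  "petals = (if odd (m1 + m2) then 2 * m2 else m2)"

abbreviation one_period :: "real set" where
  "one_period \<equiv> {0..<rho_period m1 m2}"

lemma rho_period_eq: "rho_period m1 m2 = real petals * pi / real m2"
  using m2_pos unfolding rho_period_def petals_def by auto

lemma eq_if_translate_in_period:
  assumes "s \<in> one_period" "t \<in> one_period" "s - t = of_int e * pi" "even ((int m1 + int m2) * e)"
  shows "s = t"
proof (cases "odd (m1 + m2)")
  case True
  then have "even e" using assms(4) by simp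
  have "rho_period m1 m2 = 2 * pi" using True by (simp add: rho_period_def)
  then have "0 \<le> s" "s < 2 * pi" "0 \<le> t" "t < 2 * pi" using assms(1,2) by auto
  then have "of_int e * pi < 2 * pi" "- 2 * pi < of_int e * pi"
    using assms(3) by linarith+
  then have "of_int e < (2::real)" "(-2::real) < of_int e"
    by (metis mult_less_cancel_right_pos pi_gt_zero)+
  then have "e < 2" "-2 < e" by linarith+
  with \<open>even e\<close> have "e = 0" by presburger
  then show ?thesis using assms(3) by simp
next
  case False
  have "rho_period m1 m2 = pi" using False by (simp add: rho_period_def)
  then have "0 \<le> s" "s < pi" "0 \<le> t" "t < pi" using assms(1,2) by auto
  then have "of_int e * pi < 1 * pi" "- 1 * pi < of_int e * pi" using assms(3) by linarith+
  then have "of_int e < (1::real)" "(-1::real) < of_int e"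
    by (metis mult_less_cancel_right_pos pi_gt_zero)+
  then have "e = 0" by linarith
  then show ?thesis using assms(3) by simp
qed

lemma translate_into_period:
  obtains e :: int where "even ((int m1 + int m2) * e)" "t + of_int e * pi \<in> one_period"
proof -
  define d :: int where "d = (if odd (m1 + m2) then 2 else 1)"
  have P: "rho_period m1 m2 = of_int d * pi" unfolding rho_period_def d_def by auto
  then have "rho_period m1 m2 > 0" unfolding d_def by auto
  define n where "n = \<lfloor>t / rho_period m1 m2\<rfloor>"
  have "of_int n \<le> t / rho_period m1 m2" "t / rho_period m1 m2 < of_int n + 1"
    unfolding n_def by linarith+
  then have "of_int n * rho_period m1 m2 \<le> t" "t < (of_int n + 1) * rho_period m1 m2"
    using \<open>rho_period m1 m2 > 0\<close> by (simp_all add: field_simps)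
  then have "t - of_int n * rho_period m1 m2 \<in> one_period" by (simp add: algebra_simps)
  moreover have "t + of_int (- n * d) * pi = t - of_int n * rho_period m1 m2"
    unfolding P by (simp add: algebra_simps)
  ultimately have "t + of_int (- n * d) * pi \<in> one_period" by (simp only:)
  moreover have "even ((int m1 + int m2) * (- n * d))"
    using odd_odd_if_even_sum unfolding d_def by auto
  ultimately show thesis using that by blast
qed

lemma reflection_if_double_point:
  assumes "s \<in> one_period" "t \<in> one_period" "s \<noteq> t"
    "rose_complex m1 m2 s = rose_complex m1 m2 t" "cos (real m2 * t) \<noteq> 0"
  obtains a j :: int where "even (a + j)"
    "real m2 * (s + t) = of_int a * pi" "real m1 * (s - t) = of_int j * pi"
proof -
  obtain a j where j: "real m1 * (s - t) = of_int j * pi" and aj: "even (a + j)"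
    and a: "real m2 * (s + t) = of_int a * pi \<or> real m2 * (s - t) = of_int a * pi"
    using rose_complex_eq_cases[OF assms(4,5)] .
  have "real m2 * (s - t) \<noteq> of_int a * pi"
  proof
    assume "real m2 * (s - t) = of_int a * pi"
    moreover have "even (j + a)" using aj by (simp add: add.commute)
    ultimately obtain e where "s - t = of_int e * pi" "even ((int m1 + int m2) * e)"
      using common_pi_multiple[OF j] by blast
    then show False using eq_if_translate_in_period assms(1-3) by blast
  qed
  then show thesis using that aj a j by blast
qed

lemma double_point_partner_unique:
  assumes "s1 \<in> one_period" "s2 \<in> one_period" "t \<in> one_period" "s1 \<noteq> t" "s2 \<noteq> t"
    "rose_complex m1 m2 s1 = rose_complex m1 m2 t" "rose_complex m1 m2 s2 = rose_complex m1 m2 t"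
    "cos (real m2 * t) \<noteq> 0"
  shows "s1 = s2"
proof -
  obtain a1 j1 where 1: "even (a1 + j1)"
    "real m2 * (s1 + t) = of_int a1 * pi" "real m1 * (s1 - t) = of_int j1 * pi"
    using reflection_if_double_point[OF assms(1,3,4,6,8)] .
  obtain a2 j2 where 2: "even (a2 + j2)"
    "real m2 * (s2 + t) = of_int a2 * pi" "real m1 * (s2 - t) = of_int j2 * pi"
    using reflection_if_double_point[OF assms(2,3,5,7,8)] .
  have "real m1 * (s1 - s2) = of_int (j1 - j2) * pi" "real m2 * (s1 - s2) = of_int (a1 - a2) * pi"
    using 1 2 by (simp_all add: algebra_simps)
  moreover have "even (j1 - j2 + (a1 - a2))" using 1(1) 2(1) by presburger
  ultimately obtain e where "s1 - s2 = of_int e * pi" "even ((int m1 + int m2) * e)"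
    by (rule common_pi_multiple)
  then show ?thesis using eq_if_translate_in_period assms(1,2) by blast
qed

lemma sin_ne_0_if_double_point:
  assumes "s \<in> one_period" "t \<in> one_period" "s \<noteq> t"
    "rose_complex m1 m2 s = rose_complex m1 m2 t" "cos (real m2 * t) \<noteq> 0"
  shows "sin (real m2 * t) \<noteq> 0"
proof
  assume "sin (real m2 * t) = 0"
  then obtain k :: int where k: "real m2 * t = of_int k * pi" using sin_zero_iff_int2 by blast
  obtain a j where aj: "even (a + j)" "real m2 * (s + t) = of_int a * pi"
    and j: "real m1 * (s - t) = of_int j * pi"
    using reflection_if_double_point[OF assms] .
  have "real m2 * (s - t) = of_int (a - 2 * k) * pi" using aj k by (simp add: algebra_simps)
  moreover have "even (j + (a - 2 * k))" using aj(1) by presburger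
  ultimately obtain e where "s - t = of_int e * pi" "even ((int m1 + int m2) * e)"
    using common_pi_multiple[OF j] by blast
  then show False using eq_if_translate_in_period assms(1-3) by blast
qed

text \<open>The parameters \<open>t\<^sub>l\<close> of the set \<open>LS\<close>; all double points lie on this grid.\<close>
definition grid :: "int \<Rightarrow> real" where
  "grid l = of_int l * pi / (2 * real m1 * real m2)"

lemma inj_grid: "inj grid"
  using m1_pos m2_pos by (auto intro!: injI simp: grid_def)

lemma m2_mult_grid: "real m2 * grid l = of_int l * pi / (2 * real m1)"
  using m2_pos by (simp add: grid_def)

lemma sin_grid_eq_0_iff: "sin (real m2 * grid l) = 0 \<longleftrightarrow> 2 * int m1 dvd l"
  using sin_int_pi_div_eq_0_iff[of "2 * m1" l] m1_pos by (simp add: m2_mult_grid)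

lemma cos_grid_eq_0_iff: "cos (real m2 * grid l) = 0 \<longleftrightarrow> l mod (2 * int m1) = int m1"
  using cos_int_pi_div_eq_0_iff[of m1 l] m1_pos by (simp add: m2_mult_grid)

lemma grid_in_period_iff: "grid l \<in> one_period \<longleftrightarrow> 0 \<le> l \<and> l < 2 * int m1 * int petals"
proof -
  have "grid l = of_int l * (rho_period m1 m2 / (2 * real m1 * real petals))"
    using m1_pos m2_pos petals_def by (simp add: grid_def rho_period_eq)
  moreover have "rho_period m1 m2 > 0" by (simp add: rho_period_def)
  moreover have "real (2 * m1 * petals) > 0" using m1_pos m2_pos by (simp add: petals_def)
  moreover have "real_of_int l < real_of_int (2 * int m1 * int petals)
      \<longleftrightarrow> l < 2 * int m1 * int petals"
    by (rule of_int_less_iff)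
  ultimately show ?thesis by (simp add: zero_le_mult_iff field_simps)
qed

lemma double_point_on_grid:
  assumes "s \<in> one_period" "t \<in> one_period" "s \<noteq> t"
    "rose_complex m1 m2 s = rose_complex m1 m2 t" "cos (real m2 * t) \<noteq> 0"
  obtains a j :: int where "even (a + j)" "t = grid (int m1 * a - int m2 * j)"
proof -
  obtain a j where aj: "even (a + j)"
    "real m2 * (s + t) = of_int a * pi" "real m1 * (s - t) = of_int j * pi"
    using reflection_if_double_point[OF assms] .
  have "2 * real m1 * real m2 * t = real m1 * (real m2 * (s + t)) - real m2 * (real m1 * (s - t))"
    by (simp add: algebra_simps)
  also have "\<dots> = of_int (int m1 * a - int m2 * j) * pi" using aj by (simp add: algebra_simps)
  finally have "t = grid (int m1 * a - int m2 * j)"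
    using m1_pos m2_pos by (simp add: grid_def field_simps)
  then show thesis using that aj(1) by blast
qed

text \<open>The partner of a grid parameter is its reflection \<open>t + j\<pi>/m\<^sub>1\<close>, moved back into the period.\<close>
lemma double_point_if_on_grid:
  assumes "t \<in> one_period" "sin (real m2 * t) \<noteq> 0"
    and "even (a + j)" "t = grid (int m1 * a - int m2 * j)"
  obtains s where "s \<in> one_period" "s \<noteq> t" "rose_complex m1 m2 s = rose_complex m1 m2 t"
proof -
  define s0 where "s0 = t + of_int j * pi / real m1"
  have j: "real m1 * (s0 - t) = of_int j * pi" unfolding s0_def using m1_pos by simp
  have t: "2 * real m1 * real m2 * t = of_int (int m1 * a - int m2 * j) * pi"
    using assms(4) m1_pos m2_pos by (simp add: grid_def)
  have "real m1 * (real m2 * (s0 + t)) = 2 * real m1 * real m2 * t + real m2 * (real m1 * (s0 - t))"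
    by (simp add: algebra_simps)
  also have "\<dots> = real m1 * (of_int a * pi)" unfolding t j by (simp add: algebra_simps)
  finally have a: "real m2 * (s0 + t) = of_int a * pi" using m1_pos by simp
  obtain e where e: "even ((int m1 + int m2) * e)" "s0 + of_int e * pi \<in> one_period"
    by (rule translate_into_period)
  have "rose_complex m1 m2 (s0 + of_int e * pi) = rose_complex m1 m2 t"
    using rose_complex_translate[OF e(1)] rose_complex_eq_if_reflection[OF a j assms(3)] by simp
  moreover have "s0 + of_int e * pi \<noteq> t"
  proof
    assume "s0 + of_int e * pi = t"
    then have st: "s0 - t = - of_int e * pi" by simp
    then have "of_int j * pi = of_int (- int m1 * e) * pi" using j by simp
    then have "j = - int m1 * e" by (simp only: mult_cancel_right pi_neq_zero of_int_eq_iff simp_thms)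
    then have "even (a + int m2 * e)" using assms(3) e(1) by (simp add: algebra_simps)
    then obtain k where k: "a + int m2 * e = 2 * k" by blast
    have "2 * (real m2 * t) = real m2 * (s0 + t) - real m2 * (s0 - t)" by (simp add: algebra_simps)
    also have "\<dots> = of_int a * pi + real m2 * of_int e * pi" using a st by simp
    also have "\<dots> = of_int (a + int m2 * e) * pi" by (simp add: algebra_simps)
    also have "\<dots> = 2 * (of_int k * pi)" using k by simp
    finally have "real m2 * t = of_int k * pi" by simp
    then show False using assms(2) sin_zero_iff_int2 by blast
  qed
  ultimately show thesis using that e(2) by blast
qed

lemma grid_index_iff:
  "(\<exists>a j. even (a + j) \<and> l = int m1 * a - int m2 * j) \<longleftrightarrow> odd (m1 + m2) \<or> even l"
proof
  assume "\<exists>a j. even (a + j) \<and> l = int m1 * a - int m2 * j"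
  then obtain a j where aj: "even (a + j)" "l = int m1 * a - int m2 * j" by blast
  have "even l" if ev: "even (m1 + m2)"
  proof -
    obtain p q where "m1 = 2 * p + 1" "m2 = 2 * q + 1" using odd_odd_if_even_sum[OF ev] by (meson oddE)
    then have "l = 2 * (int p * a - int q * j - j) + (a + j)" using aj(2) by (simp add: algebra_simps)
    then show "even l" using aj(1) by simp
  qed
  then show "odd (m1 + m2) \<or> even l" by blast
next
  assume l: "odd (m1 + m2) \<or> even l"
  have "gcd (int m1) (int m2) = 1" using coprime_m1_m2 by simp
  then obtain u v where uv: "u * int m1 + v * int m2 = 1" using bezout_int[of "int m1" "int m2"] by auto
  then have "l = l * (u * int m1 + v * int m2)" by simp
  then have l0: "l = int m1 * (l * u) - int m2 * (- l * v)" by (simp add: algebra_simps)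
  txt \<open>Shifting \<open>(a, j)\<close> by \<open>(m\<^sub>2, m\<^sub>1)\<close> keeps \<open>m\<^sub>1a - m\<^sub>2j\<close> and changes the parity
    of \<open>a + j\<close> by that of \<open>m\<^sub>1 + m\<^sub>2\<close>.\<close>
  show "\<exists>a j. even (a + j) \<and> l = int m1 * a - int m2 * j"
  proof (cases "even (l * u + - l * v)")
    case True
    then show ?thesis using l0 by blast
  next
    case False
    have "odd (m1 + m2)"
    proof (rule ccontr)
      assume "\<not> odd (m1 + m2)"
      then obtain p q where pq: "m1 = 2 * p + 1" "m2 = 2 * q + 1" using odd_odd_if_even_sum by (meson oddE)
      have "l * u + - l * v = l - 2 * (int p * (l * u) - int q * (- l * v) - (- l * v))"
        using l0 unfolding pq by (simp add: algebra_simps)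
      then show False using False l \<open>\<not> odd (m1 + m2)\<close> by simp
    qed
    then have "odd (int (m1 + m2))" by simp
    then have "even ((l * u + - l * v) + int (m1 + m2))" using False by (simp only: even_add)
    then have "even (l * u + int m2 + (- l * v + int m1))" by (simp add: algebra_simps)
    moreover have "l = int m1 * (l * u + int m2) - int m2 * (- l * v + int m1)"
      using l0 by (simp add: algebra_simps)
    ultimately show ?thesis by blast
  qed
qed

definition double_params :: "real set" where
  "double_params = {t \<in> one_period. cos (real m2 * t) \<noteq> 0 \<and>
     (\<exists>s \<in> one_period. s \<noteq> t \<and> rose_complex m1 m2 s = rose_complex m1 m2 t)}"

definition double_residues :: "int set" where
  "double_residues = {r. 0 < r \<and> r < 2 * int m1 \<and> r \<noteq> int m1 \<and> (odd (m1 + m2) \<or> even r)}"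

definition double_indices :: "int set" where
  "double_indices = {l. 0 \<le> l \<and> l < 2 * int m1 * int petals \<and> l mod (2 * int m1) \<in> double_residues}"

lemma double_indices_iff:
  "l \<in> double_indices \<longleftrightarrow> grid l \<in> one_period \<and> \<not> 2 * int m1 dvd l
     \<and> l mod (2 * int m1) \<noteq> int m1 \<and> (odd (m1 + m2) \<or> even l)"
proof -
  have "0 \<le> l mod (2 * int m1)" using m1_pos by simp
  then have "0 < l mod (2 * int m1) \<longleftrightarrow> \<not> 2 * int m1 dvd l" by (auto simp: dvd_eq_mod_eq_0)
  moreover have "even (l mod (2 * int m1)) \<longleftrightarrow> even l"
    using dvd_mod_iff[of 2 "2 * int m1" l] by simp
  ultimately show ?thesis
    using m1_pos pos_mod_bound[of "2 * int m1" l]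
    unfolding double_indices_def double_residues_def grid_in_period_iff by auto
qed

lemma double_params_eq: "double_params = grid ` double_indices"
proof (intro equalityI subsetI)
  fix t assume "t \<in> double_params"
  then obtain s where t: "t \<in> one_period" "cos (real m2 * t) \<noteq> 0"
    and s: "s \<in> one_period" "s \<noteq> t" "rose_complex m1 m2 s = rose_complex m1 m2 t"
    unfolding double_params_def by blast
  obtain a j where aj: "even (a + j)" "t = grid (int m1 * a - int m2 * j)"
    using double_point_on_grid[OF s(1) t(1) s(2,3) t(2)] .
  define l where "l = int m1 * a - int m2 * j"
  have "sin (real m2 * t) \<noteq> 0" using sin_ne_0_if_double_point[OF s(1) t(1) s(2,3) t(2)] .
  then have "l \<in> double_indices"
    using t aj grid_index_iff[of l] unfolding double_indices_iff l_def
    by (auto simp: sin_grid_eq_0_iff cos_grid_eq_0_iff)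
  then show "t \<in> grid ` double_indices" using aj(2) l_def by blast
next
  fix t assume "t \<in> grid ` double_indices"
  then obtain l where l: "l \<in> double_indices" "t = grid l" by blast
  then have t: "t \<in> one_period" "sin (real m2 * t) \<noteq> 0" "cos (real m2 * t) \<noteq> 0"
    unfolding double_indices_iff by (auto simp: sin_grid_eq_0_iff cos_grid_eq_0_iff)
  obtain a j where aj: "even (a + j)" "l = int m1 * a - int m2 * j"
    using l(1) grid_index_iff[of l] unfolding double_indices_iff by blast
  obtain s where "s \<in> one_period" "s \<noteq> t" "rose_complex m1 m2 s = rose_complex m1 m2 t"
    using double_point_if_on_grid[OF t(1,2) aj(1)] aj(2) l(2) by blast
  then show "t \<in> double_params" unfolding double_params_def using t by blast
qed

lemma finite_double_indices: "finite double_indices"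
  unfolding double_indices_def by (rule finite_subset[of _ "{0..<2 * int m1 * int petals}"]) auto

lemma finite_double_params: "finite double_params"
  unfolding double_params_eq using finite_double_indices by simp

lemma card_double_params: "card double_params = petals * card double_residues"
proof -
  have "card double_params = card double_indices"
    unfolding double_params_eq using inj_grid by (simp add: card_image inj_on_subset)
  also have "\<dots> = petals * card double_residues"
    unfolding double_indices_def using m1_pos
    by (intro card_int_range_mod_in) (auto simp: double_residues_def)
  finally show ?thesis .
qed

lemma card_double_residues_odd: "odd (m1 + m2) \<Longrightarrow> card double_residues = 2 * m1 - 2"
proof -
  assume "odd (m1 + m2)"
  then have "double_residues = {1..<2 * int m1} - {int m1}" by (auto simp: double_residues_def)
  then show ?thesis using m1_pos by simp
qed

lemma card_double_residues_even: "even (m1 + m2) \<Longrightarrow> card double_residues = m1 - 1"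
proof -
  assume "even (m1 + m2)"
  then have "odd m1" using odd_odd_if_even_sum by blast
  then have "2 * r \<noteq> int m1" for r :: int by (metis dvd_triv_left even_of_nat)
  then have "double_residues = (\<lambda>r. 2 * r) ` {1..<int m1}"
    using \<open>even (m1 + m2)\<close> by (auto simp: double_residues_def elim!: evenE)
  moreover have "inj_on (\<lambda>r::int. 2 * r) {1..<int m1}" by (auto intro: inj_onI)
  ultimately show ?thesis by (simp add: card_image)
qed

section \<open>Double points, centre and boundary\<close>

lemma rho_params_rhodonea:
  "rho_params m1 m2 \<alpha> (rhodonea m1 m2 \<alpha> t)
     = {u \<in> one_period. rose_complex m1 m2 u = rose_complex m1 m2 t}"
  unfolding rho_params_def rhodonea_eq_iff_rose_complex_eq by auto

lemma rhodonea_double_param_ne_centre: "t \<in> double_params \<Longrightarrow> rhodonea m1 m2 \<alpha> t \<noteq> (0,0)"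
  by (simp add: double_params_def rhodonea_eq_0_iff)

lemma norm_rhodonea_double_param: "t \<in> double_params \<Longrightarrow> norm (rhodonea m1 m2 \<alpha> t) \<noteq> 1"
  unfolding norm_rhodonea_eq_1_iff double_params_def using sin_ne_0_if_double_point by blast

lemma rho_params_double_param:
  assumes "t \<in> double_params"
  obtains s where "s \<in> double_params" "s \<noteq> t" "rho_params m1 m2 \<alpha> (rhodonea m1 m2 \<alpha> t) = {t, s}"
proof -
  obtain s where t: "t \<in> one_period" "cos (real m2 * t) \<noteq> 0"
    and s: "s \<in> one_period" "s \<noteq> t" "rose_complex m1 m2 s = rose_complex m1 m2 t"
    using assms unfolding double_params_def by blast
  have "{u \<in> one_period. rose_complex m1 m2 u = rose_complex m1 m2 t} = {t, s}"
  proof (intro equalityI subsetI)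
    fix u assume "u \<in> {u \<in> one_period. rose_complex m1 m2 u = rose_complex m1 m2 t}"
    then show "u \<in> {t, s}" using double_point_partner_unique[of u s t] t s by (cases "u = t") auto
  qed (use t s in auto)
  moreover have "s \<in> double_params"
  proof -
    have "rhodonea m1 m2 0 s = rhodonea m1 m2 0 t"
      using s(3) by (simp add: rhodonea_eq_iff_rose_complex_eq)
    then have "cos (real m2 * s) \<noteq> 0" using t(2) by (metis rhodonea_eq_0_iff)
    then show ?thesis unfolding double_params_def using s t by auto
  qed
  ultimately show thesis using that s(2) by (simp add: rho_params_rhodonea)
qed

lemma ordinary_double_points_eq:
  "{x. ordinary_double_point m1 m2 \<alpha> x \<and> x \<noteq> (0,0)} = rhodonea m1 m2 \<alpha> ` double_params"
proof (intro equalityI subsetI)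
  fix x assume "x \<in> {x. ordinary_double_point m1 m2 \<alpha> x \<and> x \<noteq> (0,0)}"
  then have "card (rho_params m1 m2 \<alpha> x) = 2" and "x \<noteq> (0,0)"
    unfolding ordinary_double_point_def traversed_def by auto
  then obtain t s where ts: "rho_params m1 m2 \<alpha> x = {t, s}" "t \<noteq> s" by (meson card_2_iff)
  then have "t \<in> rho_params m1 m2 \<alpha> x" "s \<in> rho_params m1 m2 \<alpha> x" by auto
  then have "t \<in> one_period" "s \<in> one_period" "rhodonea m1 m2 \<alpha> t = x" "rhodonea m1 m2 \<alpha> s = x"
    by (auto simp: rho_params_def)
  moreover have "cos (real m2 * t) \<noteq> 0"
    using \<open>rhodonea m1 m2 \<alpha> t = x\<close> \<open>x \<noteq> (0,0)\<close> rhodonea_eq_0_iff by metis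
  moreover have "rose_complex m1 m2 s = rose_complex m1 m2 t"
    using \<open>rhodonea m1 m2 \<alpha> t = x\<close> \<open>rhodonea m1 m2 \<alpha> s = x\<close> rhodonea_eq_iff_rose_complex_eq by metis
  ultimately have "t \<in> double_params" unfolding double_params_def using ts(2) by auto
  then show "x \<in> rhodonea m1 m2 \<alpha> ` double_params" using \<open>rhodonea m1 m2 \<alpha> t = x\<close> by blast
next
  fix x assume "x \<in> rhodonea m1 m2 \<alpha> ` double_params"
  then obtain t where t: "t \<in> double_params" "x = rhodonea m1 m2 \<alpha> t" by blast
  then obtain s where "s \<noteq> t" "rho_params m1 m2 \<alpha> x = {t, s}" using rho_params_double_param by metis
  moreover have "x \<noteq> (0,0)" using rhodonea_double_param_ne_centre t(1) unfolding t(2) by simp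
  ultimately show "x \<in> {x. ordinary_double_point m1 m2 \<alpha> x \<and> x \<noteq> (0,0)}"
    unfolding ordinary_double_point_def traversed_def by simp
qed

lemma card_double_params_eq_twice:
  "card double_params = 2 * card (rhodonea m1 m2 \<alpha> ` double_params)"
proof (rule card_eq_mult_card_image_if_fibres[OF finite_double_params])
  fix y assume "y \<in> rhodonea m1 m2 \<alpha> ` double_params"
  then obtain t where t: "t \<in> double_params" "y = rhodonea m1 m2 \<alpha> t" by blast
  then obtain s where s: "s \<in> double_params" "s \<noteq> t" "rho_params m1 m2 \<alpha> y = {t, s}"
    using rho_params_double_param by metis
  have "s \<in> rho_params m1 m2 \<alpha> y" using s(3) by simp
  then have "rhodonea m1 m2 \<alpha> s = y" by (simp add: rho_params_def)
  moreover have "u \<in> rho_params m1 m2 \<alpha> y" if "u \<in> double_params" "rhodonea m1 m2 \<alpha> u = y" for u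
    using that by (simp add: rho_params_def double_params_def)
  ultimately have "{u \<in> double_params. rhodonea m1 m2 \<alpha> u = y} = {t, s}"
    using s t by auto
  then show "card {u \<in> double_params. rhodonea m1 m2 \<alpha> u = y} = 2" using s(2) by simp
qed

lemma rho_params_centre:
  "rho_params m1 m2 \<alpha> (0,0) = (\<lambda>k. real (2 * k + 1) * pi / real (2 * m2)) ` {0..<petals}"
  using cos_zeros_in_interval[OF m2_pos, of petals]
  by (simp add: rho_params_def rhodonea_eq_0_iff rho_period_eq)

lemma traversed_centre: "traversed m1 m2 \<alpha> (0,0) petals"
proof -
  have "inj_on (\<lambda>k. real (2 * k + 1) * pi / real (2 * m2)) {0..<petals}"
    using m2_pos by (auto simp: inj_on_def field_simps)
  then show ?thesis by (simp add: traversed_def rho_params_centre card_image)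
qed

lemma self_intersection_centre: "2 \<le> petals \<Longrightarrow> self_intersection m1 m2 \<alpha> (0,0)"
proof -
  assume "2 \<le> petals"
  then have "real (2 * 0 + 1) * pi / real (2 * m2) \<in> rho_params m1 m2 \<alpha> (0,0)"
    "real (2 * 1 + 1) * pi / real (2 * m2) \<in> rho_params m1 m2 \<alpha> (0,0)"
    unfolding rho_params_centre by (auto intro!: imageI)
  moreover have "real (2 * 0 + 1) * pi / real (2 * m2) \<noteq> real (2 * 1 + 1) * pi / real (2 * m2)"
    using m2_pos by (simp add: field_simps)
  ultimately show ?thesis unfolding self_intersection_def by blast
qed

lemma boundary_points_eq:
  "boundary_points m1 m2 \<alpha> = (\<lambda>k. rhodonea m1 m2 \<alpha> (real k * pi / real m2)) ` {0..<petals}"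
proof (intro equalityI subsetI)
  fix x assume "x \<in> boundary_points m1 m2 \<alpha>"
  then obtain t where t: "x = rhodonea m1 m2 \<alpha> t" "sin (real m2 * t) = 0"
    unfolding boundary_points_def by (auto simp: norm_rhodonea_eq_1_iff)
  obtain e where e: "even ((int m1 + int m2) * e)" "t + of_int e * pi \<in> one_period"
    by (rule translate_into_period)
  define t' where "t' = t + of_int e * pi"
  have x: "x = rhodonea m1 m2 \<alpha> t'"
    unfolding t'_def t(1) rhodonea_eq_iff_rose_complex_eq using rose_complex_translate[OF e(1)] by simp
  then have "sin (real m2 * t') = 0" using t norm_rhodonea_eq_1_iff by metis
  then have "t' \<in> (\<lambda>k. real k * pi / real m2) ` {0..<petals}"
    using sin_zeros_in_interval[OF m2_pos, of petals] e(2) unfolding t'_def rho_period_eq by blast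
  then show "x \<in> (\<lambda>k. rhodonea m1 m2 \<alpha> (real k * pi / real m2)) ` {0..<petals}" using x by auto
next
  fix x assume "x \<in> (\<lambda>k. rhodonea m1 m2 \<alpha> (real k * pi / real m2)) ` {0..<petals}"
  then obtain k where "x = rhodonea m1 m2 \<alpha> (real k * pi / real m2)" by auto
  moreover have "sin (real m2 * (real k * pi / real m2)) = 0" using m2_pos by simp
  ultimately show "x \<in> boundary_points m1 m2 \<alpha>"
    unfolding boundary_points_def by (auto simp: norm_rhodonea_eq_1_iff)
qed

lemma card_boundary_points: "card (boundary_points m1 m2 \<alpha>) = petals"
proof -
  let ?b = "\<lambda>k. real k * pi / real m2"
  have "inj_on (\<lambda>k. rhodonea m1 m2 \<alpha> (?b k)) {0..<petals}"
  proof (rule inj_onI, rule ccontr)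
    fix k k' assume kk: "k \<in> {0..<petals}" "k' \<in> {0..<petals}"
      "rhodonea m1 m2 \<alpha> (?b k) = rhodonea m1 m2 \<alpha> (?b k')" "k \<noteq> k'"
    have b: "?b k \<in> one_period \<and> sin (real m2 * ?b k) = 0"
      "?b k' \<in> one_period \<and> sin (real m2 * ?b k') = 0"
      using sin_zeros_in_interval[OF m2_pos, of petals] kk(1,2) unfolding rho_period_eq by blast+
    then have "cos (real m2 * ?b k') \<noteq> 0" using sin_cos_squared_add[of "real m2 * ?b k'"] by auto
    moreover have "?b k \<noteq> ?b k'" using kk(4) m2_pos by (simp add: field_simps)
    moreover have "rose_complex m1 m2 (?b k) = rose_complex m1 m2 (?b k')"
      using kk(3) rhodonea_eq_iff_rose_complex_eq by blast
    ultimately show False using sin_ne_0_if_double_point b by blast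
  qed
  then show ?thesis by (simp add: boundary_points_eq card_image)
qed

lemma finite_boundary_points: "finite (boundary_points m1 m2 \<alpha>)"
  by (simp add: boundary_points_eq)

lemma self_intersection_iff:
  assumes "2 \<le> petals"
  shows "self_intersection m1 m2 \<alpha> x \<longleftrightarrow> x = (0,0) \<or> x \<in> rhodonea m1 m2 \<alpha> ` double_params"
proof
  assume "self_intersection m1 m2 \<alpha> x"
  then obtain s t where "s \<in> rho_params m1 m2 \<alpha> x" "t \<in> rho_params m1 m2 \<alpha> x" "s \<noteq> t"
    unfolding self_intersection_def by blast
  then have st: "s \<in> one_period" "t \<in> one_period" "rhodonea m1 m2 \<alpha> s = x" "rhodonea m1 m2 \<alpha> t = x" "s \<noteq> t"
    unfolding rho_params_def by auto
  show "x = (0,0) \<or> x \<in> rhodonea m1 m2 \<alpha> ` double_params"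
  proof (cases "x = (0,0)")
    case False
    then have "cos (real m2 * t) \<noteq> 0" using st(4) rhodonea_eq_0_iff by metis
    moreover have "rose_complex m1 m2 s = rose_complex m1 m2 t"
      using st(3,4) rhodonea_eq_iff_rose_complex_eq by metis
    ultimately have "t \<in> double_params" unfolding double_params_def using st by blast
    then show ?thesis using st(4) by blast
  qed simp
next
  assume "x = (0,0) \<or> x \<in> rhodonea m1 m2 \<alpha> ` double_params"
  then show "self_intersection m1 m2 \<alpha> x"
  proof (elim disjE)
    assume "x = (0,0)"
    then show ?thesis using self_intersection_centre[OF assms] by simp
  next
    assume "x \<in> rhodonea m1 m2 \<alpha> ` double_params"
    then obtain t where "t \<in> double_params" "x = rhodonea m1 m2 \<alpha> t" by blast
    then obtain s where "s \<noteq> t" "rho_params m1 m2 \<alpha> x = {t, s}" using rho_params_double_param by metis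
    then show ?thesis unfolding self_intersection_def by blast
  qed
qed

lemma grid_points_eq:
  assumes "odd (m1 + m2)"
  shows "rhodonea m1 m2 \<alpha> ` grid ` {0..<2 * int m1 * int petals}
       = {(0,0)} \<union> rhodonea m1 m2 \<alpha> ` double_params \<union> boundary_points m1 m2 \<alpha>"
proof (intro equalityI subsetI)
  fix x assume "x \<in> rhodonea m1 m2 \<alpha> ` grid ` {0..<2 * int m1 * int petals}"
  then obtain l where "l \<in> {0..<2 * int m1 * int petals}" and x: "x = rhodonea m1 m2 \<alpha> (grid l)"
    by blast
  then have l: "grid l \<in> one_period" unfolding grid_in_period_iff by simp
  consider "2 * int m1 dvd l" | "l mod (2 * int m1) = int m1" | "l \<in> double_indices"
    using l assms unfolding double_indices_iff by blast
  then show "x \<in> {(0,0)} \<union> rhodonea m1 m2 \<alpha> ` double_params \<union> boundary_points m1 m2 \<alpha>"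
  proof cases
    case 1
    then show ?thesis
      unfolding x boundary_points_def by (simp add: norm_rhodonea_eq_1_iff sin_grid_eq_0_iff)
  next
    case 2
    then show ?thesis unfolding x by (simp add: rhodonea_eq_0_iff cos_grid_eq_0_iff)
  next
    case 3
    then show ?thesis unfolding x double_params_eq by blast
  qed
next
  fix x assume "x \<in> {(0,0)} \<union> rhodonea m1 m2 \<alpha> ` double_params \<union> boundary_points m1 m2 \<alpha>"
  then consider "x = (0,0)" | "x \<in> rhodonea m1 m2 \<alpha> ` grid ` double_indices"
    | k where "k < petals" "x = rhodonea m1 m2 \<alpha> (grid (2 * int m1 * int k))"
    unfolding double_params_eq boundary_points_eq using m1_pos by (auto simp: grid_def)
  then show "x \<in> rhodonea m1 m2 \<alpha> ` grid ` {0..<2 * int m1 * int petals}"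
  proof cases
    case 1
    have "rhodonea m1 m2 \<alpha> (grid (int m1)) = (0,0)"
      using m1_pos by (simp add: rhodonea_eq_0_iff cos_grid_eq_0_iff)
    then have "x = rhodonea m1 m2 \<alpha> (grid (int m1))" using 1 by simp
    moreover have "int m1 < 2 * int m1 * int petals" using m1_pos m2_pos by (simp add: petals_def)
    ultimately show ?thesis by auto
  next
    case 2
    then show ?thesis by (auto simp: double_indices_def)
  next
    case 3
    then show ?thesis using m1_pos by auto
  qed
qed

lemma LS_eq:
  assumes "odd (m1 + m2)"
  shows "LS m1 m2 \<alpha> = {(0,0)} \<union> rhodonea m1 m2 \<alpha> ` double_params \<union> boundary_points m1 m2 \<alpha>"
proof -
  have "LS m1 m2 \<alpha> = rhodonea m1 m2 \<alpha> ` grid ` int ` {0..<4 * m1 * m2}"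
    unfolding LS_def grid_def image_image by simp
  also have "int ` {0..<4 * m1 * m2} = {0..<2 * int m1 * int petals}"
    using assms by (simp add: petals_def image_int_atLeastLessThan mult.assoc)
  finally show ?thesis using grid_points_eq[OF assms] by simp
qed

lemma card_double_points_odd:
  assumes "odd (m1 + m2)"
  shows "card (rhodonea m1 m2 \<alpha> ` double_params) = 2 * (m1 - 1) * m2"
proof -
  have "2 * card (rhodonea m1 m2 \<alpha> ` double_params) = 2 * m2 * (2 * m1 - 2)"
    using card_double_params_eq_twice card_double_params card_double_residues_odd[OF assms] assms
    by (simp add: petals_def)
  then show ?thesis by (simp add: algebra_simps right_diff_distrib')
qed

lemma card_double_points_even:
  assumes "even (m1 + m2)"
  shows "real (card (rhodonea m1 m2 \<alpha> ` double_params)) = (real m1 - 1) * real m2 / 2"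
proof -
  have "2 * card (rhodonea m1 m2 \<alpha> ` double_params) = m2 * (m1 - 1)"
    using card_double_params_eq_twice card_double_params card_double_residues_even[OF assms] assms
    by (simp add: petals_def)
  then have "real (2 * card (rhodonea m1 m2 \<alpha> ` double_params)) = real (m2 * (m1 - 1))"
    by (simp only:)
  then have "2 * real (card (rhodonea m1 m2 \<alpha> ` double_params)) = real m2 * (real m1 - 1)"
    using m1_pos by (simp add: of_nat_diff)
  then show ?thesis by (simp add: field_simps mult.commute)
qed

lemma card_LS:
  assumes "odd (m1 + m2)"
  shows "card (LS m1 m2 \<alpha>) = 2 * m1 * m2 + 1"
proof -
  let ?D = "rhodonea m1 m2 \<alpha> ` double_params"
  have "(0,0) \<notin> ?D" using rhodonea_double_param_ne_centre by (metis imageE)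
  moreover have "(0,0) \<notin> boundary_points m1 m2 \<alpha>" by (simp add: boundary_points_def)
  moreover have "?D \<inter> boundary_points m1 m2 \<alpha> = {}"
    using norm_rhodonea_double_param by (auto simp: boundary_points_def)
  ultimately have "card (LS m1 m2 \<alpha>) = 1 + card ?D + card (boundary_points m1 m2 \<alpha>)"
    unfolding LS_eq[OF assms] using finite_double_params finite_boundary_points
    by (simp add: card_Un_disjoint)
  also have "\<dots> = 1 + 2 * ((m1 - 1) * m2 + m2)"
    using card_double_points_odd[OF assms] card_boundary_points assms
    by (simp add: petals_def algebra_simps)
  also have "(m1 - 1) * m2 + m2 = m1 * m2" using m1_pos by (cases m1) auto
  finally show ?thesis by simp
qed

end

theorem corollary2p2:
  fixes m1 m2 :: nat and \<alpha> :: real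
  assumes "m1 > 0" and "m2 > 0" and "coprime m1 m2"
  shows "(odd (m1 + m2) \<longrightarrow>
            LS m1 m2 \<alpha> = {x. self_intersection m1 m2 \<alpha> x} \<union> boundary_points m1 m2 \<alpha>
          \<and> finite (LS m1 m2 \<alpha>) \<and> card (LS m1 m2 \<alpha>) = 2 * m1 * m2 + 1
          \<and> LS m1 m2 \<alpha> = {(0,0)} \<union> {x. ordinary_double_point m1 m2 \<alpha> x \<and> x \<noteq> (0,0)}
                              \<union> boundary_points m1 m2 \<alpha>
          \<and> traversed m1 m2 \<alpha> (0,0) (2 * m2)
          \<and> finite {x. ordinary_double_point m1 m2 \<alpha> x \<and> x \<noteq> (0,0)}
          \<and> card {x. ordinary_double_point m1 m2 \<alpha> x \<and> x \<noteq> (0,0)} = 2 * (m1 - 1) * m2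
          \<and> finite (boundary_points m1 m2 \<alpha>) \<and> card (boundary_points m1 m2 \<alpha>) = 2 * m2)
       \<and> (even (m1 + m2) \<longrightarrow>
            finite {x. ordinary_double_point m1 m2 \<alpha> x \<and> x \<noteq> (0,0)}
          \<and> real (card {x. ordinary_double_point m1 m2 \<alpha> x \<and> x \<noteq> (0,0)})
              = (real m1 - 1) * real m2 / 2
          \<and> finite (boundary_points m1 m2 \<alpha>) \<and> card (boundary_points m1 m2 \<alpha>) = m2
          \<and> traversed m1 m2 \<alpha> (0,0) m2)"
proof -
  interpret coprime_rhodonea m1 m2 using assms by unfold_locales
  have finite_LS: "finite (LS m1 m2 \<alpha>)" by (simp add: LS_def)
  show ?thesis
  proof (cases "odd (m1 + m2)")
    case True
    then have "petals = 2 * m2" by (simp add: petals_def)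
    moreover have "{x. self_intersection m1 m2 \<alpha> x} = {(0,0)} \<union> rhodonea m1 m2 \<alpha> ` double_params"
      using self_intersection_iff[of \<alpha>] \<open>petals = 2 * m2\<close> \<open>m2 > 0\<close> by auto
    ultimately show ?thesis
      using True finite_LS LS_eq card_LS card_double_points_odd finite_double_params
        finite_boundary_points card_boundary_points traversed_centre
      unfolding ordinary_double_points_eq by simp
  next
    case False
    then have "petals = m2" by (simp add: petals_def)
    then show ?thesis
      using False card_double_points_even finite_double_params finite_boundary_points
        card_boundary_points traversed_centre
      unfolding ordinary_double_points_eq by simp
  qed
qed

end
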